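(* Let $\Gamma=(V,E)$ be a connected $G$-locally arc-transitive graph (with $G\leqslant\mathrm{Aut}(\Gamma)$), let $\{\alpha,\beta\}\in E$ and let $N\unlhd G$. Suppose that $\gcd(|N_\alpha|,|\Gamma(\alpha)|)=1=\gcd(|N_\beta|,|\Gamma(\beta)|)$. Then $N$ is semiregular on $V$.
   Context: Graphs are finite, simple and undirected. $N_\gamma$ is the stabilizer in $N$ of a vertex $\gamma$ and $\Gamma(\gamma)$ its set of neighbours. $\Gamma$ is $G$-locally arc-transitive if for every vertex $\gamma$ the stabilizer $G_\gamma$ acts transitively on $\Gamma(\gamma)$. $N$ is semiregular on $V$ if $N_\gamma=1$ for all $\gamma\in V$. *)

theory Defs
  imports "HOL-Algebra.Algebra"
begin

definition simple_graph :: "'v set \<Rightarrow> ('v \<Rightarrow> 'v \<Rightarrow> bool) \<Rightarrow> bool" where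
  "simple_graph V E \<longleftrightarrow> finite V \<and> (\<forall>u w. E u w \<longrightarrow> u \<in> V \<and> w \<in> V)
     \<and> (\<forall>u w. E u w \<longrightarrow> E w u) \<and> (\<forall>u. \<not> E u u)"

definition graph_connected :: "'v set \<Rightarrow> ('v \<Rightarrow> 'v \<Rightarrow> bool) \<Rightarrow> bool" where
  "graph_connected V E \<longleftrightarrow> (\<forall>u\<in>V. \<forall>w\<in>V. E\<^sup>*\<^sup>* u w)"

definition nbrs :: "'v set \<Rightarrow> ('v \<Rightarrow> 'v \<Rightarrow> bool) \<Rightarrow> 'v \<Rightarrow> 'v set" where
  "nbrs V E x = {w \<in> V. E x w}"

definition graph_aut :: "'v set \<Rightarrow> ('v \<Rightarrow> 'v \<Rightarrow> bool) \<Rightarrow> ('v \<Rightarrow> 'v) set" where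
  "graph_aut V E = {g \<in> Bij V. \<forall>u\<in>V. \<forall>w\<in>V. E u w \<longleftrightarrow> E (g u) (g w)}"

definition perm_grp :: "'v set \<Rightarrow> ('v \<Rightarrow> 'v) set \<Rightarrow> ('v \<Rightarrow> 'v) monoid" where
  "perm_grp V H = (BijGroup V)\<lparr>carrier := H\<rparr>"

definition stab :: "('v \<Rightarrow> 'v) set \<Rightarrow> 'v \<Rightarrow> ('v \<Rightarrow> 'v) set" where
  "stab H x = {g \<in> H. g x = x}"

definition locally_arc_transitive ::
  "'v set \<Rightarrow> ('v \<Rightarrow> 'v \<Rightarrow> bool) \<Rightarrow> ('v \<Rightarrow> 'v) set \<Rightarrow> bool" where
  "locally_arc_transitive V E G \<longleftrightarrow>
     (\<forall>x\<in>V. \<forall>u\<in>nbrs V E x. \<forall>w\<in>nbrs V E x. \<exists>g\<in>stab G x. g u = w)"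

definition semiregular :: "'v set \<Rightarrow> ('v \<Rightarrow> 'v) set \<Rightarrow> bool" where
  "semiregular V N \<longleftrightarrow> (\<forall>x\<in>V. stab N x = {\<one>\<^bsub>BijGroup V\<^esub>})"

end

theory Submission
  imports Defs
begin

text \<open>Since \<open>N\<close> is normal in \<open>G\<close>, the stabiliser \<open>N\<^sub>\<gamma>\<close> is normalised by \<open>G\<^sub>\<gamma>\<close>, which is transitive
  on \<open>\<Gamma>(\<gamma>)\<close>. Hence all \<open>N\<^sub>\<gamma>\<close>-orbits on \<open>\<Gamma>(\<gamma>)\<close> have the same length; this length divides
  both \<open>|\<Gamma>(\<gamma>)|\<close> and \<open>|N\<^sub>\<gamma>|\<close>, so by coprimality it is 1 and \<open>N\<^sub>\<gamma>\<close> fixes \<open>\<Gamma>(\<gamma>)\<close> pointwise,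
  for \<open>\<gamma> \<in> {\<alpha>, \<beta>}\<close>. Conjugating by \<open>G\<close> transports this to every vertex, because
  connectivity and local arc-transitivity put every vertex in the \<open>G\<close>-orbit of \<open>\<alpha>\<close> or \<open>\<beta>\<close>.
  So an element of \<open>N\<close> fixing a vertex fixes its neighbours, and by connectivity every vertex.\<close>

lemma carrier_BijGroup [simp]: "carrier (BijGroup V) = Bij V"
  by (simp add: BijGroup_def)

lemma one_BijGroup: "\<one>\<^bsub>BijGroup V\<^esub> = (\<lambda>x\<in>V. x)"
  by (simp add: BijGroup_def)

lemma Bij_apply_mem: "f \<in> Bij V \<Longrightarrow> x \<in> V \<Longrightarrow> f x \<in> V"
  using Bij_imp_funcset by blast

lemma Bij_inj_on: "f \<in> Bij V \<Longrightarrow> inj_on f V"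
  by (simp add: Bij_def bij_betw_def)

lemma BijGroup_mult_apply:
  "f \<in> Bij V \<Longrightarrow> g \<in> Bij V \<Longrightarrow> x \<in> V \<Longrightarrow> (f \<otimes>\<^bsub>BijGroup V\<^esub> g) x = f (g x)"
  by (simp add: BijGroup_def compose_def)

lemma BijGroup_apply_inv:
  "f \<in> Bij V \<Longrightarrow> y \<in> V \<Longrightarrow> f ((inv\<^bsub>BijGroup V\<^esub> f) y) = y"
  by (simp add: inv_BijGroup Bij_def bij_betw_def f_inv_into_f)

lemma BijGroup_inv_apply:
  "f \<in> Bij V \<Longrightarrow> x \<in> V \<Longrightarrow> (inv\<^bsub>BijGroup V\<^esub> f) (f x) = x"
  by (simp add: inv_BijGroup Bij_def bij_betw_def Bij_apply_mem inv_into_f_f)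

lemma BijGroup_conj_apply:
  assumes "g \<in> Bij V" "k \<in> Bij V" "x \<in> V"
  shows "(g \<otimes>\<^bsub>BijGroup V\<^esub> k \<otimes>\<^bsub>BijGroup V\<^esub> inv\<^bsub>BijGroup V\<^esub> g) (g x) = g (k x)"
proof -
  have "inv\<^bsub>BijGroup V\<^esub> g \<in> Bij V" "g \<otimes>\<^bsub>BijGroup V\<^esub> k \<in> Bij V"
    using group.inv_closed[OF group_BijGroup] monoid.m_closed[OF group.is_monoid[OF group_BijGroup]]
      assms
    by auto
  then show ?thesis
    using assms by (simp add: BijGroup_mult_apply Bij_apply_mem BijGroup_inv_apply)
qed

lemma group_action_BijGroup: "group_action (BijGroup V) V (\<lambda>g. g)"
  unfolding group_action_def group_hom_def group_hom_axioms_def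
  by (simp add: group_BijGroup hom_def)

lemma group_action_perm_grp:
  "subgroup K (BijGroup V) \<Longrightarrow> group_action (perm_grp V K) V (\<lambda>k. k)"
  unfolding perm_grp_def by (rule group_action.induced_action[OF group_action_BijGroup])

lemma orbit_perm_grp: "orbit (perm_grp V K) (\<lambda>k. k) x = (\<lambda>k. k x) ` K"
  by (auto simp: orbit_def perm_grp_def)

lemma order_perm_grp: "order (perm_grp V K) = card K"
  by (simp add: order_def perm_grp_def)

lemma subgroup_BijGroup_if_subgroup_perm_grp:
  "subgroup G (BijGroup V) \<Longrightarrow> subgroup N (perm_grp V G) \<Longrightarrow> subgroup N (BijGroup V)"
  unfolding perm_grp_def by (rule group.incl_subgroup[OF group_BijGroup])

lemma normal_perm_grp_conj_closed:
  assumes "subgroup G (BijGroup V)" "N \<lhd> perm_grp V G" "g \<in> G" "h \<in> N"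
  shows "g \<otimes>\<^bsub>BijGroup V\<^esub> h \<otimes>\<^bsub>BijGroup V\<^esub> inv\<^bsub>BijGroup V\<^esub> g \<in> N"
  using normal.inv_op_closed2[OF assms(2), of g h] assms
    group.m_inv_consistent[OF group_BijGroup assms(1) assms(3)]
  by (simp add: perm_grp_def)

lemma subgroup_stab:
  assumes "subgroup N (BijGroup V)" "\<gamma> \<in> V"
  shows "subgroup (stab N \<gamma>) (BijGroup V)"
proof -
  have "stab N \<gamma> = N \<inter> stabilizer (BijGroup V) (\<lambda>g. g) \<gamma>"
    using subgroup.subset[OF assms(1)] by (auto simp: stab_def stabilizer_def)
  then show ?thesis
    using group.subgroups_Inter_pair[OF group_BijGroup assms(1)]
      group_action.stabilizer_subgroup[OF group_action_BijGroup assms(2)]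
    by simp
qed

lemma (in group_action) card_orbit_dvd_order:
  "x \<in> E \<Longrightarrow> card (orbit G \<phi> x) dvd order G"
  using orbit_stabilizer_theorem by (metis dvd_triv_left)

lemma (in group_action) card_orbit_dvd_card_invariant:
  assumes "finite \<Omega>" "\<Omega> \<subseteq> E"
    and invariant: "\<And>y. y \<in> \<Omega> \<Longrightarrow> orbit G \<phi> y \<subseteq> \<Omega>"
    and equal_card: "\<And>y. y \<in> \<Omega> \<Longrightarrow> card (orbit G \<phi> y) = c"
  shows "c dvd card \<Omega>"
proof -
  define C where "C = orbit G \<phi> ` \<Omega>"
  have "\<Union>C = \<Omega>"
    using invariant orbit_refl assms(2) unfolding C_def by blast
  moreover have "c1 \<inter> c2 = {}" if "c1 \<in> C" "c2 \<in> C" "c1 \<noteq> c2" for c1 c2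
    using disjoint_union[of c1 c2] that assms(2) by (auto simp: C_def orbits_def)
  moreover have "finite C" "\<forall>c'\<in>C. card c' = c"
    using assms(1) equal_card by (auto simp: C_def)
  ultimately have "c * card C = card \<Omega>"
    using card_partition[of C c] assms(1) by metis
  then show ?thesis by (metis dvd_triv_left)
qed

lemma (in group_action) fixes_invariant_subset_if_coprime:
  assumes "finite \<Omega>" "\<Omega> \<subseteq> E"
    and invariant: "\<And>y. y \<in> \<Omega> \<Longrightarrow> orbit G \<phi> y \<subseteq> \<Omega>"
    and equal_card:
      "\<And>y z. y \<in> \<Omega> \<Longrightarrow> z \<in> \<Omega> \<Longrightarrow> card (orbit G \<phi> y) = card (orbit G \<phi> z)"
    and coprime: "gcd (order G) (card \<Omega>) = 1"
    and "g \<in> carrier G" "x \<in> \<Omega>"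
  shows "\<phi> g x = x"
proof -
  have "card (orbit G \<phi> x) dvd card \<Omega>"
    using card_orbit_dvd_card_invariant[OF assms(1,2) invariant] equal_card \<open>x \<in> \<Omega>\<close> by blast
  moreover have "card (orbit G \<phi> x) dvd order G"
    using card_orbit_dvd_order \<open>x \<in> \<Omega>\<close> assms(2) by blast
  ultimately have "card (orbit G \<phi> x) = 1"
    using coprime by (metis gcd_greatest nat_dvd_1_iff_1)
  moreover have "x \<in> orbit G \<phi> x" "\<phi> g x \<in> orbit G \<phi> x"
    using orbit_refl \<open>x \<in> \<Omega>\<close> assms(2,6) by (auto simp: orbit_def)
  ultimately show ?thesis by (metis card_1_singletonE singletonD)
qed

lemma card_orbit_le_if_normalises:
  assumes "finite V" "g \<in> Bij V" "K \<subseteq> Bij V" "x \<in> V"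
    and normalises: "\<And>k. k \<in> K \<Longrightarrow>
      g \<otimes>\<^bsub>BijGroup V\<^esub> k \<otimes>\<^bsub>BijGroup V\<^esub> inv\<^bsub>BijGroup V\<^esub> g \<in> K"
  shows "card ((\<lambda>k. k x) ` K) \<le> card ((\<lambda>k. k (g x)) ` K)"
proof (rule card_inj_on_le)
  have orbit_subset: "(\<lambda>k. k y) ` K \<subseteq> V" if "y \<in> V" for y
    using assms(3) that by (auto intro: Bij_apply_mem)
  show "g ` (\<lambda>k. k x) ` K \<subseteq> (\<lambda>k. k (g x)) ` K"
    unfolding image_image
  proof (rule image_subsetI)
    fix k assume "k \<in> K"
    then have "g (k x) = (g \<otimes>\<^bsub>BijGroup V\<^esub> k \<otimes>\<^bsub>BijGroup V\<^esub> inv\<^bsub>BijGroup V\<^esub> g) (g x)"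
      using BijGroup_conj_apply[OF assms(2) subsetD[OF assms(3)] assms(4)] by simp
    then show "g (k x) \<in> (\<lambda>k. k (g x)) ` K"
      using normalises[OF \<open>k \<in> K\<close>] by (rule image_eqI)
  qed
  show "inj_on g ((\<lambda>k. k x) ` K)"
    using inj_on_subset[OF Bij_inj_on[OF assms(2)] orbit_subset[OF assms(4)]] .
  show "finite ((\<lambda>k. k (g x)) ` K)"
    using finite_subset[OF orbit_subset[OF Bij_apply_mem[OF assms(2,4)]] assms(1)] .
qed

lemma normalised_subgroup_fixes_transitive_set_if_coprime:
  assumes "finite V" "subgroup K (BijGroup V)" "\<Omega> \<subseteq> V"
    and K_invariant: "\<And>k y. k \<in> K \<Longrightarrow> y \<in> \<Omega> \<Longrightarrow> k y \<in> \<Omega>"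
    and "H \<subseteq> Bij V"
    and normalises: "\<And>g k. g \<in> H \<Longrightarrow> k \<in> K \<Longrightarrow>
      g \<otimes>\<^bsub>BijGroup V\<^esub> k \<otimes>\<^bsub>BijGroup V\<^esub> inv\<^bsub>BijGroup V\<^esub> g \<in> K"
    and transitive: "\<And>y z. y \<in> \<Omega> \<Longrightarrow> z \<in> \<Omega> \<Longrightarrow> \<exists>g\<in>H. g y = z"
    and coprime: "gcd (card K) (card \<Omega>) = 1"
    and "k \<in> K" "x \<in> \<Omega>"
  shows "k x = x"
proof -
  interpret group_action "perm_grp V K" V "\<lambda>k. k"
    by (rule group_action_perm_grp[OF assms(2)])
  have K_Bij: "K \<subseteq> Bij V"
    using subgroup.subset[OF assms(2)] by simp
  have card_le: "card ((\<lambda>k. k y) ` K) \<le> card ((\<lambda>k. k z) ` K)"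
    if yz: "y \<in> \<Omega>" "z \<in> \<Omega>" for y z
  proof -
    obtain g where g: "g \<in> H" "g y = z" using transitive yz by blast
    have "g \<in> Bij V" "y \<in> V" using g(1) yz(1) assms(3,5) by auto
    from card_orbit_le_if_normalises[OF assms(1) this(1) K_Bij this(2) normalises[OF g(1)]]
    show ?thesis using g(2) by simp
  qed
  show ?thesis
  proof (rule fixes_invariant_subset_if_coprime[of \<Omega>])
    show "finite \<Omega>" using finite_subset[OF assms(3,1)] .
    show "orbit (perm_grp V K) (\<lambda>k. k) y \<subseteq> \<Omega>" if "y \<in> \<Omega>" for y
      using K_invariant that by (auto simp: orbit_perm_grp)
    show "card (orbit (perm_grp V K) (\<lambda>k. k) y) = card (orbit (perm_grp V K) (\<lambda>k. k) z)"
      if "y \<in> \<Omega>" "z \<in> \<Omega>" for y z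
      using card_le[OF that] card_le[OF that(2,1)] by (simp add: orbit_perm_grp)
    show "gcd (order (perm_grp V K)) (card \<Omega>) = 1"
      using coprime by (simp add: order_perm_grp)
    show "k \<in> carrier (perm_grp V K)"
      using \<open>k \<in> K\<close> by (simp add: perm_grp_def)
  qed (use assms(3,10) in auto)
qed

definition stab_trivial_on_nbrs ::
  "'v set \<Rightarrow> ('v \<Rightarrow> 'v \<Rightarrow> bool) \<Rightarrow> ('v \<Rightarrow> 'v) set \<Rightarrow> 'v \<Rightarrow> bool" where
  "stab_trivial_on_nbrs V E N \<gamma> \<longleftrightarrow> (\<forall>h\<in>stab N \<gamma>. \<forall>d\<in>nbrs V E \<gamma>. h d = d)"

lemma semiregular_if_stab_trivial_on_nbrs:
  assumes "simple_graph V E" "graph_connected V E" "subgroup N (BijGroup V)"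
    and trivial: "\<And>v. v \<in> V \<Longrightarrow> stab_trivial_on_nbrs V E N v"
  shows "semiregular V N"
  unfolding semiregular_def
proof (intro ballI equalityI subsetI)
  fix v h assume v: "v \<in> V" and h: "h \<in> stab N v"
  have "h \<in> stab N w" if "w \<in> V" for w
  proof -
    have "E\<^sup>*\<^sup>* v w" using assms(2) v that by (simp add: graph_connected_def)
    then show ?thesis
    proof (induction rule: rtranclp_induct)
      case base
      show ?case using h .
    next
      case (step y z)
      have "y \<in> V" "z \<in> V" using assms(1) step.hyps(2) by (auto simp: simple_graph_def)
      then have "h z = z"
        using trivial step by (auto simp: stab_trivial_on_nbrs_def nbrs_def)
      then show ?case using step.IH by (simp add: stab_def)
    qed
  qed
  moreover have "h \<in> Bij V"
    using h subgroup.subset[OF assms(3)] by (auto simp: stab_def)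
  ultimately have "h = (\<lambda>x\<in>V. x)"
    by (intro extensionalityI[OF Bij_imp_extensional]) (auto simp: stab_def)
  then show "h \<in> {\<one>\<^bsub>BijGroup V\<^esub>}" by (simp add: one_BijGroup)
next
  fix v h assume "v \<in> V" "h \<in> {\<one>\<^bsub>BijGroup V\<^esub>}"
  then show "h \<in> stab N v"
    using subgroup.one_closed[OF assms(3)] by (simp add: stab_def one_BijGroup)
qed

locale graph_aut_group =
  fixes V :: "'v set" and E :: "'v \<Rightarrow> 'v \<Rightarrow> bool" and G :: "('v \<Rightarrow> 'v) set"
  assumes simple_graph: "simple_graph V E"
    and subgroup_G: "subgroup G (BijGroup V)"
    and G_aut: "G \<subseteq> graph_aut V E"
begin

lemma finite_V: "finite V"
  using simple_graph by (simp add: simple_graph_def)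

lemma adj_in_V: "E u w \<Longrightarrow> u \<in> V \<and> w \<in> V"
  using simple_graph by (simp add: simple_graph_def)

lemma adj_sym: "E u w \<Longrightarrow> E w u"
  using simple_graph by (simp add: simple_graph_def)

lemma G_Bij: "g \<in> G \<Longrightarrow> g \<in> Bij V"
  using subgroup.subset[OF subgroup_G] by auto

lemma inv_in_G: "g \<in> G \<Longrightarrow> inv\<^bsub>BijGroup V\<^esub> g \<in> G"
  using subgroup.m_inv_closed[OF subgroup_G] .

lemma mult_in_G: "g \<in> G \<Longrightarrow> k \<in> G \<Longrightarrow> g \<otimes>\<^bsub>BijGroup V\<^esub> k \<in> G"
  using subgroup.m_closed[OF subgroup_G] .

lemma aut_apply_mem_nbrs: "g \<in> G \<Longrightarrow> x \<in> nbrs V E \<gamma> \<Longrightarrow> g x \<in> nbrs V E (g \<gamma>)"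
  using G_aut adj_in_V G_Bij Bij_apply_mem by (fastforce simp: nbrs_def graph_aut_def)

lemma nbr_of_image_in_orbit:
  assumes "locally_arc_transitive V E G" "g \<in> G" "E a b" "E (g a) z"
  shows "\<exists>g'\<in>G. z = g' b"
proof -
  define g' where "g' = inv\<^bsub>BijGroup V\<^esub> g"
  have "a \<in> V" "z \<in> V" using adj_in_V assms(3,4) by auto
  have "g' \<in> G" using inv_in_G assms(2) by (simp add: g'_def)
  have "g' z \<in> nbrs V E (g' (g a))"
    using aut_apply_mem_nbrs[OF \<open>g' \<in> G\<close>] assms(4) \<open>z \<in> V\<close> by (simp add: nbrs_def)
  then have "g' z \<in> nbrs V E a"
    using assms(2) \<open>a \<in> V\<close> by (simp add: g'_def BijGroup_inv_apply G_Bij)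
  moreover have "b \<in> nbrs V E a" using assms(3) adj_in_V by (simp add: nbrs_def)
  ultimately obtain k where k: "k \<in> stab G a" "k b = g' z"
    using assms(1) \<open>a \<in> V\<close> unfolding locally_arc_transitive_def by blast
  have "k \<in> G" "b \<in> V" using k(1) adj_in_V[OF assms(3)] by (auto simp: stab_def)
  then have "(g \<otimes>\<^bsub>BijGroup V\<^esub> k) b = g (g' z)"
    using assms(2) k(2) by (simp add: BijGroup_mult_apply G_Bij)
  also have "\<dots> = z"
    using assms(2) \<open>z \<in> V\<close> by (simp add: g'_def BijGroup_apply_inv G_Bij)
  finally have "(g \<otimes>\<^bsub>BijGroup V\<^esub> k) b = z" .
  moreover have "g \<otimes>\<^bsub>BijGroup V\<^esub> k \<in> G" using mult_in_G assms(2) \<open>k \<in> G\<close> .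
  ultimately show ?thesis by metis
qed

lemma vertex_in_orbit_of_edge:
  assumes "graph_connected V E" "locally_arc_transitive V E G" "E \<alpha> \<beta>" "v \<in> V"
  shows "\<exists>g\<in>G. v = g \<alpha> \<or> v = g \<beta>"
proof -
  have "E\<^sup>*\<^sup>* \<alpha> v" using assms adj_in_V by (simp add: graph_connected_def)
  then show ?thesis
  proof (induction rule: rtranclp_induct)
    case base
    have "(\<lambda>x\<in>V. x) \<in> G" using subgroup.one_closed[OF subgroup_G] by (simp add: one_BijGroup)
    then show ?case using adj_in_V[OF assms(3)] by (intro bexI[of _ "\<lambda>x\<in>V. x"]) auto
  next
    case (step y z)
    then obtain g where "g \<in> G" "y = g \<alpha> \<or> y = g \<beta>" by blast
    then show ?case
      using nbr_of_image_in_orbit[OF assms(2)] assms(3) adj_sym step.hyps(2) by metis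
  qed
qed

end

locale graph_aut_normal_subgroup = graph_aut_group +
  fixes N :: "('v \<Rightarrow> 'v) set"
  assumes normal_N: "N \<lhd> perm_grp V G"
begin

lemma subgroup_N: "subgroup N (BijGroup V)"
  using subgroup_BijGroup_if_subgroup_perm_grp[OF subgroup_G normal_imp_subgroup[OF normal_N]] .

lemma stab_N_Bij: "h \<in> stab N \<gamma> \<Longrightarrow> h \<in> Bij V"
  using subgroup.subset[OF subgroup_N] by (auto simp: stab_def)

lemma stab_N_in_G: "h \<in> stab N \<gamma> \<Longrightarrow> h \<in> G"
  using subgroup.subset[OF normal_imp_subgroup[OF normal_N]] by (auto simp: stab_def perm_grp_def)

lemma conj_mem_stab:
  assumes "g \<in> G" "h \<in> stab N \<gamma>" "\<gamma> \<in> V"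
  shows "g \<otimes>\<^bsub>BijGroup V\<^esub> h \<otimes>\<^bsub>BijGroup V\<^esub> inv\<^bsub>BijGroup V\<^esub> g \<in> stab N (g \<gamma>)"
  using normal_perm_grp_conj_closed[OF subgroup_G normal_N assms(1)]
    BijGroup_conj_apply[OF G_Bij[OF assms(1)] stab_N_Bij[OF assms(2)] assms(3)] assms(2)
  by (simp add: stab_def)

lemma stab_trivial_on_nbrs_if_coprime:
  assumes "locally_arc_transitive V E G" "\<gamma> \<in> V"
    and "gcd (card (stab N \<gamma>)) (card (nbrs V E \<gamma>)) = 1"
  shows "stab_trivial_on_nbrs V E N \<gamma>"
  unfolding stab_trivial_on_nbrs_def
proof (intro ballI)
  fix h d assume "h \<in> stab N \<gamma>" "d \<in> nbrs V E \<gamma>"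
  show "h d = d"
  proof (rule normalised_subgroup_fixes_transitive_set_if_coprime
      [where H = "stab G \<gamma>", OF finite_V subgroup_stab[OF subgroup_N assms(2)]])
    show "nbrs V E \<gamma> \<subseteq> V" by (auto simp: nbrs_def)
    show "k y \<in> nbrs V E \<gamma>" if "k \<in> stab N \<gamma>" "y \<in> nbrs V E \<gamma>" for k y
      using aut_apply_mem_nbrs[OF stab_N_in_G] that by (fastforce simp: stab_def)
    show "stab G \<gamma> \<subseteq> Bij V" using G_Bij by (auto simp: stab_def)
    show "g \<otimes>\<^bsub>BijGroup V\<^esub> k \<otimes>\<^bsub>BijGroup V\<^esub> inv\<^bsub>BijGroup V\<^esub> g \<in> stab N \<gamma>"
      if "g \<in> stab G \<gamma>" "k \<in> stab N \<gamma>" for g k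
      using conj_mem_stab[of g k \<gamma>] that assms(2) by (simp add: stab_def)
    show "\<exists>g\<in>stab G \<gamma>. g y = z" if "y \<in> nbrs V E \<gamma>" "z \<in> nbrs V E \<gamma>" for y z
      using assms(1,2) that by (simp add: locally_arc_transitive_def)
  qed (use assms(3) \<open>h \<in> stab N \<gamma>\<close> \<open>d \<in> nbrs V E \<gamma>\<close> in auto)
qed

lemma stab_trivial_on_nbrs_image:
  assumes "g \<in> G" "\<gamma> \<in> V" "stab_trivial_on_nbrs V E N \<gamma>"
  shows "stab_trivial_on_nbrs V E N (g \<gamma>)"
  unfolding stab_trivial_on_nbrs_def
proof (intro ballI)
  fix h d assume h: "h \<in> stab N (g \<gamma>)" and d: "d \<in> nbrs V E (g \<gamma>)"
  define g' where "g' = inv\<^bsub>BijGroup V\<^esub> g"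
  have g': "g' \<in> G" "g' \<in> Bij V" using inv_in_G G_Bij assms(1) by (auto simp: g'_def)
  have "g' (g \<gamma>) = \<gamma>" using assms(1,2) by (simp add: g'_def BijGroup_inv_apply G_Bij)
  have "d \<in> V" "h \<in> Bij V" "g \<gamma> \<in> V"
    using d stab_N_Bij[OF h] Bij_apply_mem[OF G_Bij] assms(1,2) by (auto simp: nbrs_def)
  have "g' \<otimes>\<^bsub>BijGroup V\<^esub> h \<otimes>\<^bsub>BijGroup V\<^esub> inv\<^bsub>BijGroup V\<^esub> g' \<in> stab N \<gamma>"
    using conj_mem_stab[OF g'(1) h \<open>g \<gamma> \<in> V\<close>] \<open>g' (g \<gamma>) = \<gamma>\<close> by simp
  moreover have "g' d \<in> nbrs V E \<gamma>"
    using aut_apply_mem_nbrs[OF g'(1) d] \<open>g' (g \<gamma>) = \<gamma>\<close> by simp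
  ultimately have "(g' \<otimes>\<^bsub>BijGroup V\<^esub> h \<otimes>\<^bsub>BijGroup V\<^esub> inv\<^bsub>BijGroup V\<^esub> g') (g' d) = g' d"
    using assms(3) by (simp add: stab_trivial_on_nbrs_def)
  then have "g' (h d) = g' d"
    using BijGroup_conj_apply[OF g'(2) \<open>h \<in> Bij V\<close> \<open>d \<in> V\<close>] by simp
  then show "h d = d"
    using Bij_inj_on[OF g'(2)] Bij_apply_mem[OF \<open>h \<in> Bij V\<close>] \<open>d \<in> V\<close> by (meson inj_on_eq_iff)
qed

end

theorem lemma2p4:
  fixes V :: "'v set" and E :: "'v \<Rightarrow> 'v \<Rightarrow> bool"
    and G N :: "('v \<Rightarrow> 'v) set" and \<alpha> \<beta> :: 'v
  assumes "simple_graph V E"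
    and "graph_connected V E"
    and "subgroup G (BijGroup V)"
    and "G \<subseteq> graph_aut V E"
    and "locally_arc_transitive V E G"
    and "E \<alpha> \<beta>"
    and "N \<lhd> perm_grp V G"
    and "gcd (card (stab N \<alpha>)) (card (nbrs V E \<alpha>)) = 1"
    and "gcd (card (stab N \<beta>)) (card (nbrs V E \<beta>)) = 1"
  shows "semiregular V N"
proof -
  interpret graph_aut_normal_subgroup V E G N
    using assms(1,3,4,7)
    by (simp add: graph_aut_normal_subgroup_def graph_aut_group_def
        graph_aut_normal_subgroup_axioms_def)
  have "\<alpha> \<in> V" "\<beta> \<in> V" using adj_in_V assms(6) by auto
  then have "stab_trivial_on_nbrs V E N \<alpha>" "stab_trivial_on_nbrs V E N \<beta>"
    using stab_trivial_on_nbrs_if_coprime assms(5,8,9) by auto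
  then have "stab_trivial_on_nbrs V E N v" if "v \<in> V" for v
    using vertex_in_orbit_of_edge[OF assms(2,5,6) that] stab_trivial_on_nbrs_image
      \<open>\<alpha> \<in> V\<close> \<open>\<beta> \<in> V\<close> by blast
  then show ?thesis
    using semiregular_if_stab_trivial_on_nbrs[OF assms(1,2) subgroup_N] by blast
qed

end
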